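(* The Median mechanism $2$-approximates the complemented Gini index of utilities.
   Context: One facility is located on $[0,1]$; $n\ge1$ agents (any $n$) have locations $x_1\le\dots\le x_n$ in $[0,1]$. For a facility at $y$, agent $i$ has distance $d_i=|x_i-y|$ and utility $u_i=1-d_i$. The Gini index of utilities is $G_u=\frac{\sum_i\sum_j|u_i-u_j|}{2n\sum_i u_i}$ and the complemented Gini index is $1-G_u$. The Median mechanism locates the facility at $x_{\lceil n/2\rceil}$. For a mechanism $M$ and a maximization objective $O$, the approximation ratio is the supremum over all profiles $x$ (over all numbers of agents) of $\mathrm{OPT}(x)/O(M(x))$, where $\mathrm{OPT}(x)=\max_{y\in[0,1]}O(y)$; $M$ "$\alpha$-approximates" $O$ if this approximation ratio equals $\alpha$. *)

theory Defs
  imports Complex_Main "HOL-Library.Extended_Real"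
begin

definition valid_profile :: "nat \<Rightarrow> (nat \<Rightarrow> real) \<Rightarrow> bool" where
  "valid_profile n x \<longleftrightarrow> n \<ge> 1 \<and> (\<forall>i\<in>{1..n}. 0 \<le> x i \<and> x i \<le> 1)
     \<and> (\<forall>i j. 1 \<le> i \<and> i \<le> j \<and> j \<le> n \<longrightarrow> x i \<le> x j)"

definition util :: "(nat \<Rightarrow> real) \<Rightarrow> real \<Rightarrow> nat \<Rightarrow> real" where
  "util x y i = 1 - \<bar>x i - y\<bar>"

definition gini_util :: "nat \<Rightarrow> (nat \<Rightarrow> real) \<Rightarrow> real \<Rightarrow> real" where
  "gini_util n x y =
     (\<Sum>i\<in>{1..n}. \<Sum>j\<in>{1..n}. \<bar>util x y i - util x y j\<bar>)
     / (2 * real n * (\<Sum>i\<in>{1..n}. util x y i))"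

definition compl_gini :: "nat \<Rightarrow> (nat \<Rightarrow> real) \<Rightarrow> real \<Rightarrow> real" where
  "compl_gini n x y = 1 - gini_util n x y"

definition median_mech :: "nat \<Rightarrow> (nat \<Rightarrow> real) \<Rightarrow> real" where
  "median_mech n x = x (nat \<lceil>real n / 2\<rceil>)"

definition opt_cgini :: "nat \<Rightarrow> (nat \<Rightarrow> real) \<Rightarrow> real" where
  "opt_cgini n x = (SUP y\<in>{0..1}. compl_gini n x y)"

definition median_cgini_ratio :: ereal where
  "median_cgini_ratio =
     (SUP p\<in>{(n, x). valid_profile n x}.
        ereal (opt_cgini (fst p) (snd p) / compl_gini (fst p) (snd p) (median_mech (fst p) (snd p))))"

end

theory Submission
  imports Defs
begin

text \<open>
  With the facility at the median \<open>t = x\<^sub>k\<close>, the distances \<open>d\<^sub>i = |x\<^sub>i - t|\<close> are at most \<open>t\<close>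
  for the fewer than \<open>n/2\<close> agents left of \<open>k\<close> and at most \<open>1 - t\<close> for the at most \<open>n/2\<close>
  agents right of it. Bounding \<open>|d\<^sub>i - d\<^sub>j|\<close> by \<open>d\<^sub>i + d\<^sub>j\<close> across sides and by \<open>2c - d\<^sub>i - d\<^sub>j\<close>
  on a side of bound \<open>c\<close> gives \<open>\<Sum>\<^sub>i\<^sub>,\<^sub>j |d\<^sub>i - d\<^sub>j| \<le> n (n - \<Sum>\<^sub>i d\<^sub>i) = n \<Sum>\<^sub>i u\<^sub>i\<close>, so the
  Gini index at the median is at most \<open>1/2\<close>, while the complemented index never exceeds \<open>1\<close>.
  Two agents at \<open>0\<close> and \<open>1\<close> attain the ratio \<open>2\<close>: the median \<open>0\<close> scores \<open>1/2\<close>, the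
  midpoint scores \<open>1\<close>.
\<close>

lemma nat_ceiling_half: "nat \<lceil>real n / 2\<rceil> = (n + 1) div 2"
proof -
  have "\<lceil>real n / 2\<rceil> = int ((n + 1) div 2)"
    by (rule ceiling_unique) linarith+
  then show ?thesis by simp
qed

lemma sum_sum_if_both_in:
  assumes "finite I" "L \<subseteq> I"
  shows "(\<Sum>i\<in>I. \<Sum>j\<in>I. if i \<in> L \<and> j \<in> L then g i j else 0) = (\<Sum>i\<in>L. \<Sum>j\<in>L. g i j)"
proof -
  have "(\<Sum>i\<in>I. \<Sum>j\<in>I. if i \<in> L \<and> j \<in> L then g i j else 0)
      = (\<Sum>i\<in>I. if i \<in> L then \<Sum>j\<in>I. if j \<in> L then g i j else 0 else 0)"
    by (intro sum.cong) auto
  also have "\<dots> = (\<Sum>i\<in>L. \<Sum>j\<in>L. g i j)"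
    using assms by (simp add: sum.inter_restrict[symmetric] Int_absorb1 inf.absorb2)
  finally show ?thesis .
qed

lemma sum_sum_add:
  fixes d :: "'a \<Rightarrow> 'b::comm_semiring_1"
  shows "(\<Sum>i\<in>L. \<Sum>j\<in>L. d i + d j) = 2 * of_nat (card L) * sum d L"
  by (simp add: sum.distrib sum_distrib_left[symmetric] sum.swap[of "\<lambda>i j. d i"] mult_2 distrib_right)

lemma sum_sum_slack:
  fixes d :: "'a \<Rightarrow> 'b::comm_ring_1"
  shows "(\<Sum>i\<in>L. \<Sum>j\<in>L. 2 * c - 2 * d i - 2 * d j)
    = 2 * c * of_nat (card L) ^ 2 - 4 * of_nat (card L) * sum d L"
proof -
  have "(\<Sum>i\<in>L. \<Sum>j\<in>L. 2 * c - 2 * d i - 2 * d j)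
      = (\<Sum>i\<in>L. \<Sum>j\<in>L. 2 * c) - 2 * (\<Sum>i\<in>L. \<Sum>j\<in>L. d i + d j)"
    by (simp add: sum_subtractf sum_distrib_left algebra_simps)
  then show ?thesis
    by (simp add: sum_sum_add power2_eq_square)
qed

lemma sum_abs_diff_two_sided_le:
  fixes d :: "'a \<Rightarrow> real" and t s :: real
  assumes I: "finite I" "L \<subseteq> I" "R \<subseteq> I" "L \<inter> R = {}"
    and rest: "\<And>i. i \<in> I - (L \<union> R) \<Longrightarrow> d i = 0"
    and left: "\<And>i. i \<in> L \<Longrightarrow> 0 \<le> d i \<and> d i \<le> t"
    and right: "\<And>i. i \<in> R \<Longrightarrow> 0 \<le> d i \<and> d i \<le> s"
    and card: "2 * card L \<le> card I" "2 * card R \<le> card I"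
    and "0 \<le> t" "0 \<le> s"
  shows "(\<Sum>i\<in>I. \<Sum>j\<in>I. \<bar>d i - d j\<bar>) + card I * sum d I \<le> (t + s) * real (card I) ^ 2"
proof -
  define n P Q where "n = real (card I)" and "P = real (card L)" and "Q = real (card R)"
  define A B where "A = sum d L" and "B = sum d R"
  have nonneg: "0 \<le> d i" if "i \<in> I" for i
    using that rest left right by (cases "i \<in> L \<union> R") auto
  have pair: "\<bar>d i - d j\<bar> \<le> d i + d j
      + (if i \<in> L \<and> j \<in> L then 2 * t - 2 * d i - 2 * d j else 0)
      + (if i \<in> R \<and> j \<in> R then 2 * s - 2 * d i - 2 * d j else 0)"
    if "i \<in> I" "j \<in> I" for i j
    using nonneg[OF that(1)] nonneg[OF that(2)] left[of i] left[of j] right[of i] right[of j] I(4)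
    by auto
  have "(\<Sum>i\<in>I. \<Sum>j\<in>I. \<bar>d i - d j\<bar>)
      \<le> (\<Sum>i\<in>I. \<Sum>j\<in>I. d i + d j)
        + (\<Sum>i\<in>L. \<Sum>j\<in>L. 2 * t - 2 * d i - 2 * d j)
        + (\<Sum>i\<in>R. \<Sum>j\<in>R. 2 * s - 2 * d i - 2 * d j)"
  proof -
    have "(\<Sum>i\<in>I. \<Sum>j\<in>I. \<bar>d i - d j\<bar>)
        \<le> (\<Sum>i\<in>I. \<Sum>j\<in>I. d i + d j
        + (if i \<in> L \<and> j \<in> L then 2 * t - 2 * d i - 2 * d j else 0)
        + (if i \<in> R \<and> j \<in> R then 2 * s - 2 * d i - 2 * d j else 0))"
      by (intro sum_mono pair)
    then show ?thesis
      by (simp only: sum.distrib sum_sum_if_both_in I)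
  qed
  also have "\<dots> = 2 * n * sum d I + 2 * t * P ^ 2 - 4 * P * A + 2 * s * Q ^ 2 - 4 * Q * B"
    unfolding n_def P_def Q_def A_def B_def sum_sum_add sum_sum_slack by simp
  finally have spread: "(\<Sum>i\<in>I. \<Sum>j\<in>I. \<bar>d i - d j\<bar>)
      \<le> 2 * n * sum d I + 2 * t * P ^ 2 - 4 * P * A + 2 * s * Q ^ 2 - 4 * Q * B" .
  have "sum d I = sum d (L \<union> R)"
    using I rest by (intro sum.mono_neutral_right) auto
  then have D: "sum d I = A + B"
    unfolding A_def B_def using I by (simp add: sum.union_disjoint finite_subset)
  have "A \<le> t * P"
    unfolding A_def P_def using sum_bounded_above[of L d t] left by (simp add: mult.commute)
  moreover have "B \<le> s * Q"
    unfolding B_def Q_def using sum_bounded_above[of R d s] right by (simp add: mult.commute)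
  moreover have "2 * P \<le> n" "2 * Q \<le> n" "0 \<le> P" "0 \<le> Q"
    unfolding n_def P_def Q_def using card by linarith+
  ultimately have "0 \<le> (3 * n - 4 * P) * (t * P - A) + (3 * n - 4 * Q) * (s * Q - B)
      + t * ((n - P) * (n - 2 * P)) + s * ((n - Q) * (n - 2 * Q))"
    using \<open>0 \<le> t\<close> \<open>0 \<le> s\<close> by (intro add_nonneg_nonneg mult_nonneg_nonneg) auto
  also have "\<dots> = (t + s) * n ^ 2
      - (2 * n * sum d I + 2 * t * P ^ 2 - 4 * P * A + 2 * s * Q ^ 2 - 4 * Q * B + n * sum d I)"
    unfolding D by (simp add: algebra_simps power2_eq_square)
  finally show ?thesis
    using spread unfolding n_def by linarith
qed

lemma util_nonneg:
  assumes "valid_profile n x" "i \<in> {1..n}" "y \<in> {0..1}"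
  shows "0 \<le> util x y i"
proof -
  have "0 \<le> x i" "x i \<le> 1"
    using assms(1,2) unfolding valid_profile_def by auto
  with assms(3) show ?thesis
    unfolding util_def by auto
qed

lemma gini_util_median_le_half:
  assumes x: "valid_profile n x"
  shows "gini_util n x (median_mech n x) \<le> 1 / 2"
proof -
  define k where "k = (n + 1) div 2"
  define t where "t = x k"
  define d where "d i = \<bar>x i - t\<bar>" for i
  have n: "1 \<le> n" and x01: "\<And>i. i \<in> {1..n} \<Longrightarrow> 0 \<le> x i \<and> x i \<le> 1"
    and sorted: "\<And>i j. 1 \<le> i \<Longrightarrow> i \<le> j \<Longrightarrow> j \<le> n \<Longrightarrow> x i \<le> x j"
    using x unfolding valid_profile_def by auto
  have k: "k \<in> {1..n}"
    unfolding k_def using n by auto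
  have median: "median_mech n x = t"
    unfolding median_mech_def t_def k_def nat_ceiling_half ..
  have "(\<Sum>i\<in>{1..n}. \<Sum>j\<in>{1..n}. \<bar>d i - d j\<bar>) + card {1..n} * sum d {1..n}
      \<le> (t + (1 - t)) * real (card {1..n}) ^ 2"
  proof (rule sum_abs_diff_two_sided_le[where L = "{1..<k}" and R = "{k<..n}"])
    show "i \<in> {1..n} - ({1..<k} \<union> {k<..n}) \<Longrightarrow> d i = 0" for i
      using k by (auto simp: d_def t_def)
    show "0 \<le> d i \<and> d i \<le> t" if "i \<in> {1..<k}" for i
      using that k sorted[of i k] x01[of i] by (auto simp: d_def t_def)
    show "0 \<le> d i \<and> d i \<le> 1 - t" if "i \<in> {k<..n}" for i
      using that k sorted[of k i] x01[of i] by (auto simp: d_def t_def)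
    show "2 * card {1..<k} \<le> card {1..n}" "2 * card {k<..n} \<le> card {1..n}"
      unfolding k_def by auto
    show "0 \<le> t" "0 \<le> 1 - t"
      using x01[OF k] by (auto simp: t_def)
  qed (use k in auto)
  then have spread: "(\<Sum>i\<in>{1..n}. \<Sum>j\<in>{1..n}. \<bar>d i - d j\<bar>) \<le> n * (n - sum d {1..n})"
    by (simp add: power2_eq_square algebra_simps)
  have u: "util x t i = 1 - d i" for i
    unfolding util_def d_def ..
  have total: "(\<Sum>i\<in>{1..n}. util x t i) = n - sum d {1..n}"
    by (simp add: u sum_subtractf)
  have t01: "t \<in> {0..1}"
    using x01[OF k] by (simp add: t_def)
  have "1 = util x t k"
    by (simp add: util_def t_def)
  also have "\<dots> \<le> (\<Sum>i\<in>{1..n}. util x t i)"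
    using k util_nonneg[OF x _ t01] by (intro member_le_sum) auto
  finally have "1 \<le> n - sum d {1..n}"
    unfolding total .
  with spread n show ?thesis
    unfolding gini_util_def median total by (simp add: u abs_minus_commute divide_le_eq)
qed

lemma compl_gini_median_ge_half:
  assumes "valid_profile n x"
  shows "1 / 2 \<le> compl_gini n x (median_mech n x)"
  using gini_util_median_le_half[OF assms] unfolding compl_gini_def by simp

lemma compl_gini_le_1:
  assumes x: "valid_profile n x" and y: "y \<in> {0..1}"
  shows "compl_gini n x y \<le> 1"
proof -
  have "0 \<le> (\<Sum>i\<in>{1..n}. util x y i)"
    using util_nonneg[OF x _ y] by (intro sum_nonneg)
  then have "0 \<le> gini_util n x y"
    unfolding gini_util_def by (intro divide_nonneg_nonneg sum_nonneg) auto
  then show ?thesis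
    unfolding compl_gini_def by simp
qed

lemma opt_cgini_le_1:
  assumes "valid_profile n x"
  shows "opt_cgini n x \<le> 1"
  unfolding opt_cgini_def using compl_gini_le_1[OF assms] by (intro cSUP_least) auto

lemma compl_gini_le_opt_cgini:
  assumes "valid_profile n x" "y \<in> {0..1}"
  shows "compl_gini n x y \<le> opt_cgini n x"
  unfolding opt_cgini_def
  using assms compl_gini_le_1[OF assms(1)] by (intro cSUP_upper bdd_aboveI[of _ 1]) auto

lemma median_cgini_ratio_le_2:
  assumes "valid_profile n x"
  shows "opt_cgini n x / compl_gini n x (median_mech n x) \<le> 2"
  using compl_gini_median_ge_half[OF assms] opt_cgini_le_1[OF assms]
  by (simp add: divide_le_eq)

definition extreme_profile :: "nat \<Rightarrow> real" where
  "extreme_profile i = (if i \<le> 1 then 0 else 1)"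

lemma extreme_profile_valid: "valid_profile 2 extreme_profile"
  unfolding valid_profile_def extreme_profile_def by auto

lemma median_cgini_ratio_extreme_profile:
  "opt_cgini 2 extreme_profile / compl_gini 2 extreme_profile (median_mech 2 extreme_profile) = 2"
proof -
  have agents: "{1..2::nat} = {1, 2}"
    by auto
  have median: "median_mech 2 extreme_profile = 0"
    by (simp add: median_mech_def extreme_profile_def)
  have at_median: "compl_gini 2 extreme_profile 0 = 1 / 2"
    and at_midpoint: "compl_gini 2 extreme_profile (1 / 2) = 1"
    unfolding compl_gini_def gini_util_def agents by (simp_all add: util_def extreme_profile_def)
  have "opt_cgini 2 extreme_profile = 1"
    using compl_gini_le_opt_cgini[OF extreme_profile_valid, of "1 / 2"]
      opt_cgini_le_1[OF extreme_profile_valid] at_midpoint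
    by simp
  then show ?thesis
    unfolding median at_median by simp
qed

theorem theorem3:
  shows "median_cgini_ratio = 2"
  unfolding median_cgini_ratio_def
proof (rule antisym)
  show "(SUP p\<in>{(n, x). valid_profile n x}.
      ereal (opt_cgini (fst p) (snd p) / compl_gini (fst p) (snd p) (median_mech (fst p) (snd p)))) \<le> 2"
    using median_cgini_ratio_le_2 by (intro SUP_least) auto
  show "2 \<le> (SUP p\<in>{(n, x). valid_profile n x}.
      ereal (opt_cgini (fst p) (snd p) / compl_gini (fst p) (snd p) (median_mech (fst p) (snd p))))"
    using extreme_profile_valid median_cgini_ratio_extreme_profile
    by (intro SUP_upper2[where i = "(2, extreme_profile)"]) auto
qed

end
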